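(* Let $\mathcal L:\mathcal Y\times\mathbb R\to\mathbb R$ be continuously differentiable and $\mu$-strongly convex, and fix $\varepsilon>0$. (1) If $n\ge1$ and $f_1,f_2\in\mathrm{NN}_n$ satisfy $R(f_i)\le R(\mathrm{NN}_n)+\varepsilon$ for $i\in\{1,2\}$, then $D(f_1,f_2)\le\frac8\mu\big(R(\mathrm{NN}_n)-R(\mathrm{NN}_{2n})+\varepsilon\big)$. (2) If $d\ge1$ and $f_1,f_2\in\mathsf{Tree}_d$ satisfy $R(f_i)\le R(\mathsf{Tree}_d)+\varepsilon$ for $i\in\{1,2\}$, then $D(f_1,f_2)\le\frac8\mu\big(R(\mathsf{Tree}_d)-R(\mathsf{Tree}_{2d})+\varepsilon\big)$.
   Context: $P$ is a distribution on $\mathcal X\times\mathcal Y$ with $\mathcal X\subseteq\mathbb R^m$; expectations are over $(x,y)\sim P$. $\mathcal L$ is $\mu$-strongly convex if $\mathcal L(y,p_1)\ge\mathcal L(y,p_2)+\partial_p\mathcal L(y,p_2)(p_1-p_2)+\frac\mu2(p_1-p_2)^2$ for all $y,p_1,p_2$. $R(f)=\mathbb E[\mathcal L(y,f(x))]$, $R(\mathcal F)=\inf_{f\in\mathcal F}R(f)$, $D(f_1,f_2)=\mathbb E[(f_1(x)-f_2(x))^2]$. With $\sigma(t)=\max\{0,t\}$, $\mathrm{NN}_n$ is the class of real-valued functions on $\mathcal X$ computable by a finite directed acyclic graph with at most $n$ internal nodes, each computing $\sigma(\langle w,u\rangle+b)$ of its inputs $u$, with an output node computing an affine combination of the input coordinates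 and internal node values. $\mathsf{Tree}_d$ is the class of predictors computed by axis-aligned regression trees of depth at most $d$: rooted binary trees whose internal nodes are labeled by a coordinate $j\in[m]$ and threshold $t$ (routing $x$ left iff $x_j\le t$) and whose leaves are labeled by constants in $[0,1]$. *)

theory Defs
  imports "HOL-Probability.Probability"
begin

definition relu :: "real \<Rightarrow> real" where
  "relu t = max 0 t"

text \<open>A finite DAG is written in topological
order: internal node i (i < k) receives the input coordinates (weights A i) and the values of
the earlier internal nodes l < i (weights C i l; weight 0 = no edge); the output node is an
affine combination of the input coordinates and all internal node values.\<close>
definition NN :: "nat \<Rightarrow> (real ^ 'm \<Rightarrow> real) set" where
  "NN n = {f. \<exists>k \<le> n. \<exists>(A :: nat \<Rightarrow> real ^ 'm) (C :: nat \<Rightarrow> nat \<Rightarrow> real) (b :: nat \<Rightarrow> real)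
                 (\<alpha> :: real ^ 'm) (\<beta> :: nat \<Rightarrow> real) (\<gamma> :: real).
             \<forall>x. \<exists>v :: nat \<Rightarrow> real.
                 (\<forall>i < k. v i = relu (A i \<bullet> x + (\<Sum>l<i. C i l * v l) + b i)) \<and>
                 f x = \<alpha> \<bullet> x + (\<Sum>l<k. \<beta> l * v l) + \<gamma>}"

datatype 'm rtree = Leaf real | Node 'm real "'m rtree" "'m rtree"

fun tdepth :: "'m rtree \<Rightarrow> nat" where
  "tdepth (Leaf c) = 0"
| "tdepth (Node j t l r) = Suc (max (tdepth l) (tdepth r))"

fun leaves_ok :: "'m rtree \<Rightarrow> bool" where
  "leaves_ok (Leaf c) = (0 \<le> c \<and> c \<le> 1)"
| "leaves_ok (Node j t l r) = (leaves_ok l \<and> leaves_ok r)"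

fun teval :: "'m rtree \<Rightarrow> real ^ 'm \<Rightarrow> real" where
  "teval (Leaf c) x = c"
| "teval (Node j t l r) x = (if x $ j \<le> t then teval l x else teval r x)"

definition Tree :: "nat \<Rightarrow> (real ^ 'm \<Rightarrow> real) set" where
  "Tree d = {teval t | t. tdepth t \<le> d \<and> leaves_ok t}"

definition risk :: "((real ^ 'm) \<times> 'y) measure \<Rightarrow> ('y \<Rightarrow> real \<Rightarrow> real) \<Rightarrow> (real ^ 'm \<Rightarrow> real) \<Rightarrow> real" where
  "risk P L f = (\<integral>z. L (snd z) (f (fst z)) \<partial>P)"

definition class_risk :: "((real ^ 'm) \<times> 'y) measure \<Rightarrow> ('y \<Rightarrow> real \<Rightarrow> real) \<Rightarrow> (real ^ 'm \<Rightarrow> real) set \<Rightarrow> ereal" where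
  "class_risk P L F = (INF f\<in>F. ereal (risk P L f))"

definition dist2 :: "((real ^ 'm) \<times> 'y) measure \<Rightarrow> (real ^ 'm \<Rightarrow> real) \<Rightarrow> (real ^ 'm \<Rightarrow> real) \<Rightarrow> real" where
  "dist2 P f1 f2 = (\<integral>z. (f1 (fst z) - f2 (fst z))^2 \<partial>P)"

definition strongly_convex_loss :: "real \<Rightarrow> ('y \<Rightarrow> real \<Rightarrow> real) \<Rightarrow> ('y \<Rightarrow> real \<Rightarrow> real) \<Rightarrow> bool" where
  "strongly_convex_loss \<mu> L L' \<longleftrightarrow>
     (\<forall>y p1 p2. L y p1 \<ge> L y p2 + L' y p2 * (p1 - p2) + \<mu> / 2 * (p1 - p2)^2)"

end

theory Submission
  imports Defs
begin

text \<open>If \<open>f\<^sub>1, f\<^sub>2\<close> are \<open>\<epsilon>\<close>-minimizers over a class \<open>F\<close> and their midpoint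
  \<open>g = (f\<^sub>1 + f\<^sub>2)/2\<close> lies in a larger class \<open>G\<close>, strong convexity of the loss gives pointwise
  \<open>\<mu>/8 (f\<^sub>1 - f\<^sub>2)\<^sup>2 \<le> (L f\<^sub>1 + L f\<^sub>2)/2 - L g\<close>; integrating,
  \<open>\<mu>/8 D(f\<^sub>1,f\<^sub>2) \<le> R(F) + \<epsilon> - R(G)\<close>. A network with \<open>2n\<close> nodes computes the midpoint of two
  networks with \<open>n\<close> nodes by running them side by side, and a tree of depth \<open>2d\<close> computes the
  midpoint of two trees of depth \<open>d\<close> by grafting the second one below every leaf of the first.\<close>

lemma strongly_convex_loss_midpoint:
  assumes "strongly_convex_loss \<mu> L L'"
  shows "\<mu> / 8 * (a - b)\<^sup>2 \<le> (L y a + L y b) / 2 - L y ((a + b) / 2)"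
proof -
  define m where "m = (a + b) / 2"
  define \<delta> where "\<delta> = (a - b) / 2"
  have "a = m + \<delta>" "b = m - \<delta>"
    unfolding m_def \<delta>_def by (simp_all add: field_simps)
  then have "L y a \<ge> L y m + L' y m * \<delta> + \<mu> / 2 * \<delta>\<^sup>2"
    and "L y b \<ge> L y m - L' y m * \<delta> + \<mu> / 2 * \<delta>\<^sup>2"
    using assms[unfolded strongly_convex_loss_def, rule_format, of y m a]
      assms[unfolded strongly_convex_loss_def, rule_format, of y m b]
    by simp_all
  moreover have "\<mu> / 8 * (a - b)\<^sup>2 = \<mu> / 2 * \<delta>\<^sup>2"
    unfolding \<delta>_def by (simp add: power_divide)
  ultimately show ?thesis
    unfolding m_def by argo
qed

lemma risk_midpoint_gap:
  fixes M :: "((real ^ 'm) \<times> 'y) measure"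
  assumes convex: "strongly_convex_loss \<mu> L L'" and "\<mu> \<ge> 0"
    and int1: "integrable M (\<lambda>z. L (snd z) (f1 (fst z)))"
    and int2: "integrable M (\<lambda>z. L (snd z) (f2 (fst z)))"
    and int_mid: "integrable M (\<lambda>z. L (snd z) ((f1 (fst z) + f2 (fst z)) / 2))"
  shows "\<mu> / 8 * dist2 M f1 f2
           \<le> (risk M L f1 + risk M L f2) / 2 - risk M L (\<lambda>x. (f1 x + f2 x) / 2)"
proof -
  define gap where "gap z = (L (snd z) (f1 (fst z)) + L (snd z) (f2 (fst z))) / 2
                              - L (snd z) ((f1 (fst z) + f2 (fst z)) / 2)" for z
  have gap_ge: "\<mu> / 8 * (f1 (fst z) - f2 (fst z))\<^sup>2 \<le> gap z" for z
    unfolding gap_def by (rule strongly_convex_loss_midpoint[OF convex])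
  have int_gap: "integrable M gap"
    unfolding gap_def using int1 int2 int_mid by simp
  have integral_gap: "(\<integral>z. gap z \<partial>M)
      = (risk M L f1 + risk M L f2) / 2 - risk M L (\<lambda>x. (f1 x + f2 x) / 2)"
    unfolding gap_def risk_def using int1 int2 int_mid by simp
  show ?thesis
  proof (cases "integrable M (\<lambda>z. (f1 (fst z) - f2 (fst z))\<^sup>2)")
    case True
    then have "\<mu> / 8 * dist2 M f1 f2 = (\<integral>z. \<mu> / 8 * (f1 (fst z) - f2 (fst z))\<^sup>2 \<partial>M)"
      unfolding dist2_def by simp
    also have "\<dots> \<le> (\<integral>z. gap z \<partial>M)"
      using True int_gap gap_ge by (intro integral_mono) auto
    finally show ?thesis
      unfolding integral_gap .
  next
    case False
    \<comment> \<open>then \<open>dist2\<close> is the junk value \<open>0\<close>\<close>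
    have "0 \<le> gap z" for z
      using order_trans[OF _ gap_ge] \<open>\<mu> \<ge> 0\<close> by simp
    then have "0 \<le> (\<integral>z. gap z \<partial>M)"
      by simp
    with False show ?thesis
      unfolding integral_gap dist2_def by (simp add: not_integrable_integral_eq)
  qed
qed

lemma dist2_near_minimizers_le:
  fixes P :: "((real ^ 'm) \<times> 'y) measure"
  assumes convex: "strongly_convex_loss \<mu> L L'" and "\<mu> > 0"
    and "F \<subseteq> G"
    and midpoint: "(\<lambda>x. (f1 x + f2 x) / 2) \<in> G"
    and integrable: "\<forall>f\<in>G. integrable P (\<lambda>z. L (snd z) (f (fst z)))"
    and "f1 \<in> F" "f2 \<in> F"
    and near1: "ereal (risk P L f1) \<le> class_risk P L F + ereal \<epsilon>"
    and near2: "ereal (risk P L f2) \<le> class_risk P L F + ereal \<epsilon>"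
  shows "ereal (dist2 P f1 f2) \<le> ereal (8 / \<mu>) * (class_risk P L F - class_risk P L G + ereal \<epsilon>)"
proof -
  let ?g = "\<lambda>x. (f1 x + f2 x) / 2"
  have gap: "\<mu> / 8 * dist2 P f1 f2 \<le> (risk P L f1 + risk P L f2) / 2 - risk P L ?g"
    using \<open>F \<subseteq> G\<close> \<open>f1 \<in> F\<close> \<open>f2 \<in> F\<close> midpoint integrable \<open>\<mu> > 0\<close>
    by (intro risk_midpoint_gap[OF convex]) auto
  have F_le: "class_risk P L F \<le> ereal (risk P L f1)"
    unfolding class_risk_def using \<open>f1 \<in> F\<close> by (rule INF_lower)
  have G_le: "class_risk P L G \<le> ereal (risk P L ?g)"
    unfolding class_risk_def using midpoint by (rule INF_lower)
  obtain r where r: "class_risk P L F = ereal r"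
    using F_le near1 by (cases "class_risk P L F") auto
  show ?thesis
  proof (cases "class_risk P L G")
    case (real s)
    have "risk P L f1 \<le> r + \<epsilon>" "risk P L f2 \<le> r + \<epsilon>" "s \<le> risk P L ?g"
      using near1 near2 G_le unfolding r real by simp_all
    with gap have "\<mu> / 8 * dist2 P f1 f2 \<le> r + \<epsilon> - s"
      by argo
    then have "dist2 P f1 f2 \<le> 8 / \<mu> * (r - s + \<epsilon>)"
      using \<open>\<mu> > 0\<close> by (simp add: field_simps)
    then show ?thesis
      using r real by simp
  next
    case PInf
    with G_le show ?thesis
      by simp
  next
    case MInf
    then show ?thesis
      using r \<open>\<mu> > 0\<close> by simp
  qed
qed

definition relu_nodes ::
    "nat \<Rightarrow> (nat \<Rightarrow> real ^ 'm) \<Rightarrow> (nat \<Rightarrow> nat \<Rightarrow> real) \<Rightarrow> (nat \<Rightarrow> real) \<Rightarrow> real ^ 'm \<Rightarrow> (nat \<Rightarrow> real) \<Rightarrow> bool"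
  where "relu_nodes k A C b x v \<longleftrightarrow> (\<forall>i<k. v i = relu (A i \<bullet> x + (\<Sum>l<i. C i l * v l) + b i))"

lemma NN_iff:
  "f \<in> NN n \<longleftrightarrow> (\<exists>k\<le>n. \<exists>A C b \<alpha> \<beta> \<gamma>. \<forall>x. \<exists>v.
      relu_nodes k A C b x v \<and> f x = \<alpha> \<bullet> x + (\<Sum>l<k. \<beta> l * v l) + \<gamma>)"
  unfolding NN_def relu_nodes_def by simp

lemma NN_mono: "n \<le> n' \<Longrightarrow> NN n \<subseteq> NN n'"
  unfolding NN_iff subset_iff by (meson order_trans)

definition stack :: "nat \<Rightarrow> (nat \<Rightarrow> 'a) \<Rightarrow> (nat \<Rightarrow> 'a) \<Rightarrow> nat \<Rightarrow> 'a"
  where "stack k u w i = (if i < k then u i else w (i - k))"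

lemma sum_lessThan_stack:
  "(\<Sum>i<k + k'. stack k u w i) = (\<Sum>i<k. u i) + (\<Sum>i<k'. w i)"
  by (induction k') (simp_all add: stack_def add.assoc)

lemma relu_nodes_stack:
  assumes "relu_nodes k1 A1 C1 b1 x v1" "relu_nodes k2 A2 C2 b2 x v2"
  shows "relu_nodes (k1 + k2) (stack k1 A1 A2) (stack k1 C1 (\<lambda>j. stack k1 (\<lambda>_. 0) (C2 j)))
           (stack k1 b1 b2) x (stack k1 v1 v2)"
  unfolding relu_nodes_def
proof (intro allI impI)
  fix i assume "i < k1 + k2"
  show "stack k1 v1 v2 i = relu (stack k1 A1 A2 i \<bullet> x
          + (\<Sum>l<i. stack k1 C1 (\<lambda>j. stack k1 (\<lambda>_. 0) (C2 j)) i l * stack k1 v1 v2 l) + stack k1 b1 b2 i)"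
  proof (cases "i < k1")
    case True
    then have "(\<Sum>l<i. stack k1 C1 (\<lambda>j. stack k1 (\<lambda>_. 0) (C2 j)) i l * stack k1 v1 v2 l)
        = (\<Sum>l<i. C1 i l * v1 l)"
      by (intro sum.cong) (auto simp: stack_def)
    with True assms(1) show ?thesis
      unfolding relu_nodes_def by (simp add: stack_def)
  next
    case False
    define j where "j = i - k1"
    have i: "i = k1 + j" "j < k2"
      using False \<open>i < k1 + k2\<close> unfolding j_def by simp_all
    have "(\<Sum>l<i. stack k1 C1 (\<lambda>j. stack k1 (\<lambda>_. 0) (C2 j)) i l * stack k1 v1 v2 l)
        = (\<Sum>l<k1 + j. stack k1 (\<lambda>_. 0) (\<lambda>l. C2 j l * v2 l) l)"
      unfolding i(1) by (intro sum.cong) (auto simp: stack_def)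
    also have "\<dots> = (\<Sum>l<j. C2 j l * v2 l)"
      by (simp add: sum_lessThan_stack)
    finally show ?thesis
      using False i assms(2) unfolding relu_nodes_def by (simp add: stack_def)
  qed
qed

lemma NN_linear_combination:
  assumes "f1 \<in> NN n1" "f2 \<in> NN n2"
  shows "(\<lambda>x. a * f1 x + b * f2 x) \<in> NN (n1 + n2)"
proof -
  obtain k1 A1 C1 b1 \<alpha>1 \<beta>1 \<gamma>1 where "k1 \<le> n1"
    and net1: "\<And>x. \<exists>v. relu_nodes k1 A1 C1 b1 x v \<and> f1 x = \<alpha>1 \<bullet> x + (\<Sum>l<k1. \<beta>1 l * v l) + \<gamma>1"
    using assms(1) unfolding NN_iff by blast
  obtain k2 A2 C2 b2 \<alpha>2 \<beta>2 \<gamma>2 where "k2 \<le> n2"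
    and net2: "\<And>x. \<exists>v. relu_nodes k2 A2 C2 b2 x v \<and> f2 x = \<alpha>2 \<bullet> x + (\<Sum>l<k2. \<beta>2 l * v l) + \<gamma>2"
    using assms(2) unfolding NN_iff by blast
  let ?\<beta> = "stack k1 (\<lambda>l. a * \<beta>1 l) (\<lambda>l. b * \<beta>2 l)"
  have "\<exists>v. relu_nodes (k1 + k2) (stack k1 A1 A2) (stack k1 C1 (\<lambda>j. stack k1 (\<lambda>_. 0) (C2 j)))
           (stack k1 b1 b2) x v
         \<and> a * f1 x + b * f2 x = (a *\<^sub>R \<alpha>1 + b *\<^sub>R \<alpha>2) \<bullet> x + (\<Sum>l<k1 + k2. ?\<beta> l * v l)
                                + (a * \<gamma>1 + b * \<gamma>2)" for x
  proof -
    obtain v1 v2 where v1: "relu_nodes k1 A1 C1 b1 x v1" "f1 x = \<alpha>1 \<bullet> x + (\<Sum>l<k1. \<beta>1 l * v1 l) + \<gamma>1"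
      and v2: "relu_nodes k2 A2 C2 b2 x v2" "f2 x = \<alpha>2 \<bullet> x + (\<Sum>l<k2. \<beta>2 l * v2 l) + \<gamma>2"
      using net1 net2 by meson
    have "(\<Sum>l<k1 + k2. ?\<beta> l * stack k1 v1 v2 l)
        = a * (\<Sum>l<k1. \<beta>1 l * v1 l) + b * (\<Sum>l<k2. \<beta>2 l * v2 l)"
      using sum_lessThan_stack[where k = k1 and k' = k2
          and u = "\<lambda>l. a * \<beta>1 l * v1 l" and w = "\<lambda>l. b * \<beta>2 l * v2 l"]
      by (simp add: stack_def sum_distrib_left mult.assoc if_distrib cong: if_cong)
    then show ?thesis
      using relu_nodes_stack[OF v1(1) v2(1)] v1(2) v2(2)
      by (intro exI[of _ "stack k1 v1 v2"]) (simp add: inner_add_left algebra_simps)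
  qed
  moreover have "k1 + k2 \<le> n1 + n2"
    using \<open>k1 \<le> n1\<close> \<open>k2 \<le> n2\<close> by simp
  ultimately show ?thesis
    unfolding NN_iff by blast
qed

lemma NN_midpoint:
  assumes "f1 \<in> NN n" "f2 \<in> NN n"
  shows "(\<lambda>x. (f1 x + f2 x) / 2) \<in> NN (2 * n)"
  using NN_linear_combination[OF assms, of "1 / 2" "1 / 2"] by (simp add: mult_2 add_divide_distrib)

fun map_leaves :: "(real \<Rightarrow> real) \<Rightarrow> 'm rtree \<Rightarrow> 'm rtree" where
  "map_leaves h (Leaf c) = Leaf (h c)"
| "map_leaves h (Node j t l r) = Node j t (map_leaves h l) (map_leaves h r)"

fun graft :: "(real \<Rightarrow> real \<Rightarrow> real) \<Rightarrow> 'm rtree \<Rightarrow> 'm rtree \<Rightarrow> 'm rtree" where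
  "graft h (Leaf c) t' = map_leaves (h c) t'"
| "graft h (Node j t l r) t' = Node j t (graft h l t') (graft h r t')"

lemma teval_map_leaves: "teval (map_leaves h t) x = h (teval t x)"
  by (induction t) auto

lemma tdepth_map_leaves: "tdepth (map_leaves h t) = tdepth t"
  by (induction t) auto

lemma leaves_ok_map_leaves:
  "leaves_ok t \<Longrightarrow> h ` {0..1} \<subseteq> {0..1} \<Longrightarrow> leaves_ok (map_leaves h t)"
  by (induction t) (auto simp: image_subset_iff)

lemma teval_graft: "teval (graft h t t') x = h (teval t x) (teval t' x)"
  by (induction t) (auto simp: teval_map_leaves)

lemma tdepth_graft: "tdepth (graft h t t') \<le> tdepth t + tdepth t'"
  by (induction t) (auto simp: tdepth_map_leaves)

lemma leaves_ok_graft: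
  assumes "leaves_ok t" "leaves_ok t'" "\<And>c c'. c \<in> {0..1} \<Longrightarrow> c' \<in> {0..1} \<Longrightarrow> h c c' \<in> {0..1}"
  shows "leaves_ok (graft h t t')"
  using assms(1) by (induction t) (auto intro!: leaves_ok_map_leaves assms(2,3))

lemma Tree_mono: "d \<le> d' \<Longrightarrow> Tree d \<subseteq> Tree d'"
  unfolding Tree_def by auto

lemma Tree_combine:
  assumes "f1 \<in> Tree d1" "f2 \<in> Tree d2"
    and "\<And>c c'. c \<in> {0..1} \<Longrightarrow> c' \<in> {0..1} \<Longrightarrow> h c c' \<in> {0..1}"
  shows "(\<lambda>x. h (f1 x) (f2 x)) \<in> Tree (d1 + d2)"
proof -
  obtain t1 t2 where "f1 = teval t1" "tdepth t1 \<le> d1" "leaves_ok t1"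
    and "f2 = teval t2" "tdepth t2 \<le> d2" "leaves_ok t2"
    using assms(1,2) unfolding Tree_def by blast
  with assms(3) show ?thesis
    unfolding Tree_def using tdepth_graft[of h t1 t2]
    by (auto simp: teval_graft intro!: exI[of _ "graft h t1 t2"] leaves_ok_graft)
qed

lemma Tree_midpoint:
  assumes "f1 \<in> Tree d" "f2 \<in> Tree d"
  shows "(\<lambda>x. (f1 x + f2 x) / 2) \<in> Tree (2 * d)"
  using Tree_combine[OF assms, of "\<lambda>c c'. (c + c') / 2"] by (simp add: mult_2)

theorem theorem7:
  fixes P :: "((real ^ 'm) \<times> 'y) measure"
    and L L' :: "'y \<Rightarrow> real \<Rightarrow> real"
    and \<mu> \<epsilon> :: real
  assumes "prob_space P"
    and "\<And>y p. (L y has_real_derivative L' y p) (at p)"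
    and "\<And>y. continuous_on UNIV (L' y)"
    and "\<mu> > 0"
    and "strongly_convex_loss \<mu> L L'"
    and "\<epsilon> > 0"
  shows
    "(\<forall>n f1 f2. n \<ge> 1
        \<longrightarrow> (\<forall>f\<in>NN (2*n). integrable P (\<lambda>z. L (snd z) (f (fst z))))
        \<longrightarrow> f1 \<in> NN n \<longrightarrow> f2 \<in> NN n
        \<longrightarrow> ereal (risk P L f1) \<le> class_risk P L (NN n) + ereal \<epsilon>
        \<longrightarrow> ereal (risk P L f2) \<le> class_risk P L (NN n) + ereal \<epsilon>
        \<longrightarrow> ereal (dist2 P f1 f2)
              \<le> ereal (8 / \<mu>) * (class_risk P L (NN n) - class_risk P L (NN (2*n)) + ereal \<epsilon>))
     \<and>
     (\<forall>d f1 f2. d \<ge> 1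
        \<longrightarrow> (\<forall>f\<in>Tree (2*d). integrable P (\<lambda>z. L (snd z) (f (fst z))))
        \<longrightarrow> f1 \<in> Tree d \<longrightarrow> f2 \<in> Tree d
        \<longrightarrow> ereal (risk P L f1) \<le> class_risk P L (Tree d) + ereal \<epsilon>
        \<longrightarrow> ereal (risk P L f2) \<le> class_risk P L (Tree d) + ereal \<epsilon>
        \<longrightarrow> ereal (dist2 P f1 f2)
              \<le> ereal (8 / \<mu>) * (class_risk P L (Tree d) - class_risk P L (Tree (2*d)) + ereal \<epsilon>))"
proof (intro conjI allI impI)
  fix n :: nat and f1 f2 :: "real ^ 'm \<Rightarrow> real"
  assume "\<forall>f\<in>NN (2*n). integrable P (\<lambda>z. L (snd z) (f (fst z)))" "f1 \<in> NN n" "f2 \<in> NN n"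
    "ereal (risk P L f1) \<le> class_risk P L (NN n) + ereal \<epsilon>"
    "ereal (risk P L f2) \<le> class_risk P L (NN n) + ereal \<epsilon>"
  with NN_mono[of n "2 * n"] NN_midpoint show "ereal (dist2 P f1 f2)
      \<le> ereal (8 / \<mu>) * (class_risk P L (NN n) - class_risk P L (NN (2*n)) + ereal \<epsilon>)"
    by (intro dist2_near_minimizers_le[OF assms(5,4)]) auto
next
  fix d :: nat and f1 f2 :: "real ^ 'm \<Rightarrow> real"
  assume "\<forall>f\<in>Tree (2*d). integrable P (\<lambda>z. L (snd z) (f (fst z)))" "f1 \<in> Tree d" "f2 \<in> Tree d"
    "ereal (risk P L f1) \<le> class_risk P L (Tree d) + ereal \<epsilon>"
    "ereal (risk P L f2) \<le> class_risk P L (Tree d) + ereal \<epsilon>"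
  with Tree_mono[of d "2 * d"] Tree_midpoint show "ereal (dist2 P f1 f2)
      \<le> ereal (8 / \<mu>) * (class_risk P L (Tree d) - class_risk P L (Tree (2*d)) + ereal \<epsilon>)"
    by (intro dist2_near_minimizers_le[OF assms(5,4)]) auto
qed

end
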